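(* Let $q$ be odd, $V$ an $n$-dimensional space over $\mathbb{F}_q$, $n\ge4$, $G$ one of $\mathrm{SL}(V),\mathrm{Sp}(V),\mathrm{SU}(V)$, $\mathcal T$ the set of transvections of $G$, and $X\subseteq\mathcal T$ a generating set of $G$ satisfying: (P2) ${}_VX$ spans $V$, $X_{V^*}$ spans $V^*$, $\Gamma(X)$ strongly connected; (P3) the weights of all cycles of $\Gamma(X)$ generate $\mathbb{F}_q$; (P4) if $G=\mathrm{Sp}(V)$ every cycle of $\Gamma(\mathcal T)$ is symplectic; (P5) if $G=\mathrm{SL}(V)$ and $q$ is a square, $\Gamma(X)$ contains a non-unitary cycle; (P6) the directed diameter of $\Gamma(X'')$ is at most $2$ for every $X\subseteq X''\subseteq\mathcal T$; (P7) the two-way diameter of $\Gamma(X'')$ is at most $6$ for every $X\subseteq X''\subseteq \mathcal T$. For $k\ge2$ let $L_k=L_k(X)$ be the subfield of $\mathbb{F}_q$ generated by the weights of the cycles of $\Gamma(X)$ of length at most $k$. Assume $k\ge 3$ is an integer with $L_{k-1}\ne L_k$. Then (1) $k\in\{3,4,5\}$; (2) if $k\in\{4,5\}$ and $(r_1,\dots,r_k)$ is a cycle of $\Gamma(X)$ whose weight is not in $L_{k-1}$, then there is an index $i$, $1\le i\le k$, such that $[r_i,r_{i+2}]$ is not an edge of $\Gamma(X)$ (indices mod $k$).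
   Context: Transvections $s=1+u_s\otimes\phi_s$ ($x\mapsto x+\phi_s(x)u_s$). $\Gamma(Y)$: directed graph on $Y$ with edge $[s,t]$ iff $\phi_t(u_s)\ne0$; two-way edges/paths/diameter as usual (both directions are edges). Weight of $(r_1,\dots,r_k)$: $w=\prod_{i=1}^k\phi_{r_{i+1}}(u_{r_i})$ (indices mod $k$); a $k$-tuple with nonzero weight is a cycle of length $k$. Symplectic: $w(r_1,\dots,r_k)+(-1)^{k+1}w(r_k,\dots,r_1)=0$; unitary: $w(r_1,\dots,r_k)+(-1)^{k+1}w(r_k,\dots,r_1)^{\sqrt q}=0$. ${}_VX$, $X_{V^*}$: the sets of $u_s$, resp. $\phi_s$, for $s\in X$. *)

theory Defs
  imports "HOL-Analysis.Analysis"
begin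

type_synonym ('a,'n) mtx = "'a^'n^'n"

text \<open>Evaluation of a dual vector (represented by its coordinate vector) at a vector.\<close>
definition dual_app :: "'a::field^'n \<Rightarrow> 'a^'n \<Rightarrow> 'a" where
  "dual_app \<phi> x = (\<Sum>i\<in>UNIV. \<phi>$i * x$i)"

definition outer :: "'a::field^'n \<Rightarrow> 'a^'n \<Rightarrow> 'a^'n^'n" where
  "outer u \<phi> = (\<chi> i j. u$i * \<phi>$j)"

definition is_transv_rep :: "'a::field^'n^'n \<Rightarrow> 'a^'n \<Rightarrow> 'a^'n \<Rightarrow> bool" where
  "is_transv_rep s u \<phi> \<longleftrightarrow> u \<noteq> 0 \<and> \<phi> \<noteq> 0 \<and> dual_app \<phi> u = 0 \<and> s = mat 1 + outer u \<phi>"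

definition is_transvection :: "'a::field^'n^'n \<Rightarrow> bool" where
  "is_transvection s \<longleftrightarrow> (\<exists>u \<phi>. is_transv_rep s u \<phi>)"

definition u_of :: "'a::field^'n^'n \<Rightarrow> 'a^'n" where
  "u_of s = fst (SOME p. is_transv_rep s (fst p) (snd p))"

definition phi_of :: "'a::field^'n^'n \<Rightarrow> 'a^'n" where
  "phi_of s = snd (SOME p. is_transv_rep s (fst p) (snd p))"

definition SL_grp :: "('a::field,'n::finite) mtx set" where
  "SL_grp = {A. det A = 1}"

definition alt_nondeg :: "'a::field^'n^'n \<Rightarrow> bool" where
  "alt_nondeg J \<longleftrightarrow> (\<forall>i. J$i$i = 0) \<and> transpose J = - J \<and> det J \<noteq> 0"

definition Sp_grp :: "('a::field,'n::finite) mtx \<Rightarrow> ('a,'n) mtx set" where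
  "Sp_grp J = {A. transpose A ** J ** A = J}"

text \<open>Field automorphism x |-> x^r (r = sqrt q), applied entrywise.\<close>
definition frob_mat :: "nat \<Rightarrow> 'a::field^'n^'n \<Rightarrow> 'a^'n^'n" where
  "frob_mat r A = (\<chi> i j. (A$i$j) ^ r)"

definition herm_nondeg :: "nat \<Rightarrow> 'a::field^'n^'n \<Rightarrow> bool" where
  "herm_nondeg r J \<longleftrightarrow> transpose (frob_mat r J) = J \<and> det J \<noteq> 0"

definition SU_grp :: "nat \<Rightarrow> ('a::field,'n::finite) mtx \<Rightarrow> ('a,'n) mtx set" where
  "SU_grp r J = {A. det A = 1 \<and> transpose (frob_mat r A) ** J ** A = J}"

definition is_SL :: "('a::{field,finite},'n::finite) mtx set \<Rightarrow> bool" where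
  "is_SL G \<longleftrightarrow> G = SL_grp"

definition is_Sp :: "('a::{field,finite},'n::finite) mtx set \<Rightarrow> bool" where
  "is_Sp G \<longleftrightarrow> (\<exists>J. alt_nondeg J \<and> G = Sp_grp J)"

definition is_SU :: "('a::{field,finite},'n::finite) mtx set \<Rightarrow> bool" where
  "is_SU G \<longleftrightarrow> (\<exists>r J. r * r = CARD('a) \<and> herm_nondeg r J \<and> G = SU_grp r J)"

inductive_set mgen :: "('a::field,'n::finite) mtx set \<Rightarrow> ('a,'n) mtx set" for X where
  one: "mat 1 \<in> mgen X"
| mult: "a \<in> X \<Longrightarrow> b \<in> mgen X \<Longrightarrow> a ** b \<in> mgen X"
| inv: "a \<in> X \<Longrightarrow> a ** c = mat 1 \<Longrightarrow> b \<in> mgen X \<Longrightarrow> c ** b \<in> mgen X"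

definition edge :: "('a::field,'n::finite) mtx set \<Rightarrow> ('a,'n) mtx \<Rightarrow> ('a,'n) mtx \<Rightarrow> bool" where
  "edge Y s t \<longleftrightarrow> s \<in> Y \<and> t \<in> Y \<and> dual_app (phi_of t) (u_of s) \<noteq> 0"

definition twoway_edge :: "('a::field,'n::finite) mtx set \<Rightarrow> ('a,'n) mtx \<Rightarrow> ('a,'n) mtx \<Rightarrow> bool" where
  "twoway_edge Y s t \<longleftrightarrow> edge Y s t \<and> edge Y t s"

definition strongly_connected :: "('a::field,'n::finite) mtx set \<Rightarrow> bool" where
  "strongly_connected Y \<longleftrightarrow> (\<forall>s\<in>Y. \<forall>t\<in>Y. (s, t) \<in> {(a,b). edge Y a b}\<^sup>*)"

definition dir_diam_le :: "('a::field,'n::finite) mtx set \<Rightarrow> nat \<Rightarrow> bool" where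
  "dir_diam_le Y d \<longleftrightarrow> (\<forall>s\<in>Y. \<forall>t\<in>Y. \<exists>m p. m \<le> d \<and> p 0 = s \<and> p m = t \<and>
      (\<forall>i<m. edge Y (p i) (p (Suc i))))"

definition twoway_diam_le :: "('a::field,'n::finite) mtx set \<Rightarrow> nat \<Rightarrow> bool" where
  "twoway_diam_le Y d \<longleftrightarrow> (\<forall>s\<in>Y. \<forall>t\<in>Y. \<exists>m p. m \<le> d \<and> p 0 = s \<and> p m = t \<and>
      (\<forall>i<m. twoway_edge Y (p i) (p (Suc i))))"

definition weight :: "('a::field,'n::finite) mtx list \<Rightarrow> 'a" where
  "weight r = (\<Prod>i<length r. dual_app (phi_of (r ! ((i+1) mod length r))) (u_of (r ! i)))"

definition is_cycle :: "('a::field,'n::finite) mtx set \<Rightarrow> ('a,'n) mtx list \<Rightarrow> bool" where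
  "is_cycle Y r \<longleftrightarrow> length r \<ge> 1 \<and> set r \<subseteq> Y \<and> weight r \<noteq> 0"

definition symplectic_cycle :: "('a::field,'n::finite) mtx list \<Rightarrow> bool" where
  "symplectic_cycle r \<longleftrightarrow> weight r + (-1)^(length r + 1) * weight (rev r) = 0"

definition unitary_cycle :: "nat \<Rightarrow> ('a::field,'n::finite) mtx list \<Rightarrow> bool" where
  "unitary_cycle sq r \<longleftrightarrow> weight r + (-1)^(length r + 1) * (weight (rev r)) ^ sq = 0"

definition is_subfield :: "'a::field set \<Rightarrow> bool" where
  "is_subfield F \<longleftrightarrow> 0 \<in> F \<and> 1 \<in> F \<and> (\<forall>x\<in>F. \<forall>y\<in>F. x + y \<in> F \<and> x * y \<in> F) \<and>
     (\<forall>x\<in>F. - x \<in> F \<and> inverse x \<in> F)"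

definition subfield_gen :: "'a::field set \<Rightarrow> 'a set" where
  "subfield_gen S = \<Inter>{F. is_subfield F \<and> S \<subseteq> F}"

definition Lk :: "('a::field,'n::finite) mtx set \<Rightarrow> nat \<Rightarrow> 'a set" where
  "Lk X k = subfield_gen {weight r | r. is_cycle X r \<and> length r \<le> k}"

end

theory Submission
  imports Defs
begin

text \<open>
  Cut a closed walk of weight \<open>\<alpha>\<beta>\<close> into a walk \<open>\<alpha>\<close> from \<open>s\<close> to \<open>t\<close> and a walk
  \<open>\<beta>\<close> back. If there are strictly shorter walks \<open>\<delta>\<close> from \<open>s\<close> to \<open>t\<close> and \<open>\<gamma>\<close> from \<open>t\<close>
  to \<open>s\<close> of nonzero weight, then \<open>\<alpha>\<beta> = (\<alpha>\<gamma>)(\<delta>\<beta>)/(\<delta>\<gamma>)\<close> is a quotient of weights of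
  strictly shorter closed walks, so it already lies in \<open>L\<^bsub>k-1\<^esub>\<close>. For a cycle
  \<open>(r\<^sub>1, \<dots>, r\<^sub>k)\<close> with \<open>k \<ge> 6\<close>, directed diameter at most 2 provides such shortcuts between
  \<open>r\<^sub>1\<close> and \<open>r\<^sub>4\<close>; for \<open>k \<in> {4, 5}\<close> the chords \<open>[r\<^sub>i, r\<^bsub>i+2\<^esub>]\<close> provide them.
  Only the diameter bound (P6) for \<open>X\<close> itself is needed.
\<close>

abbreviation edge_weight :: "('a::field,'n::finite) mtx \<Rightarrow> ('a,'n) mtx \<Rightarrow> 'a" where
  "edge_weight s t \<equiv> dual_app (phi_of t) (u_of s)"

fun path_weight :: "('a::field,'n::finite) mtx list \<Rightarrow> 'a" where
  "path_weight [] = 1"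
| "path_weight [x] = 1"
| "path_weight (x # y # zs) = edge_weight x y * path_weight (y # zs)"

lemma path_weight_append:
  "path_weight (xs @ [x]) * path_weight (x # ys) = path_weight (xs @ x # ys)"
  by (induction xs rule: path_weight.induct) (auto simp: mult.assoc)

lemma path_weight_map_upt:
  "path_weight (map p [0..<Suc m]) = (\<Prod>i<m. edge_weight (p i) (p (Suc i)))"
proof (induction m)
  case (Suc m)
  have "path_weight (map p [0..<Suc (Suc m)]) = path_weight (map p [0..<Suc m] @ [p (Suc m)])"
    by simp
  also have "\<dots> = path_weight (map p [0..<Suc m]) * edge_weight (p m) (p (Suc m))"
    using path_weight_append[of "map p [0..<m]" "p m" "[p (Suc m)]"] by simp
  finally show ?case using Suc.IH by simp
qed simp

lemma weight_eq_path_weight: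
  assumes "l \<noteq> []"
  shows "weight l = path_weight (l @ [hd l])"
proof -
  let ?n = "length l"
  have "map (\<lambda>i. l ! (i mod ?n)) [0..<?n] = map ((!) l) [0..<?n]"
    by (rule map_cong) auto
  then have "l @ [hd l] = map (\<lambda>i. l ! (i mod ?n)) [0..<Suc ?n]"
    using assms by (simp add: map_nth hd_conv_nth)
  then have "path_weight (l @ [hd l]) = (\<Prod>i<?n. edge_weight (l ! (i mod ?n)) (l ! (Suc i mod ?n)))"
    by (simp only: path_weight_map_upt)
  also have "\<dots> = (\<Prod>i<?n. edge_weight (l ! i) (l ! (Suc i mod ?n)))"
    by (rule prod.cong) auto
  finally show ?thesis
    unfolding weight_def by simp
qed

definition from_to :: "'b list \<Rightarrow> 'b \<Rightarrow> 'b \<Rightarrow> bool" where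
  "from_to P s t \<longleftrightarrow> P \<noteq> [] \<and> hd P = s \<and> last P = t"

definition cycle_of :: "'b list \<Rightarrow> 'b list \<Rightarrow> 'b list" where
  "cycle_of A B = butlast A @ butlast B"

lemma length_cycle_of:
  "from_to A s t \<Longrightarrow> from_to B t s \<Longrightarrow> length (cycle_of A B) = length A + length B - 2"
  unfolding from_to_def cycle_of_def by (cases A; cases B) auto

lemma set_cycle_of: "set (cycle_of A B) \<subseteq> set A \<union> set B"
  unfolding cycle_of_def by (auto dest: in_set_butlastD)

lemma weight_cycle_of:
  assumes A: "from_to A s t" and B: "from_to B t s"
  shows "weight (cycle_of A B) = path_weight A * path_weight B"
proof (cases "cycle_of A B = []")
  case True
  then have "A = [t]" "B = [s]"
    using A B unfolding from_to_def cycle_of_def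
    by (metis Nil_is_append_conv append_butlast_last_id append_Nil)+
  with True show ?thesis by (simp add: weight_def)
next
  case False
  have "hd (cycle_of A B) = s"
    using A B False unfolding from_to_def cycle_of_def
    by (cases A; cases B) (auto split: if_splits)
  then have "cycle_of A B @ [hd (cycle_of A B)] = butlast A @ t # tl B"
    using A B unfolding from_to_def cycle_of_def
    by (metis append.assoc append_butlast_last_id hd_Cons_tl)
  moreover have "butlast A @ [t] = A" "t # tl B = B"
    using A B unfolding from_to_def by (metis append_butlast_last_id, metis list.collapse)
  ultimately show ?thesis
    using False path_weight_append[of "butlast A" t "tl B"] by (simp add: weight_eq_path_weight)
qed

lemma is_subfield_Inter: "(\<And>F. F \<in> \<F> \<Longrightarrow> is_subfield F) \<Longrightarrow> is_subfield (\<Inter>\<F>)"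
  unfolding is_subfield_def by blast

lemma is_subfield_subfield_gen: "is_subfield (subfield_gen S)"
  unfolding subfield_gen_def by (rule is_subfield_Inter) blast

lemma subfield_gen_subset: "S \<subseteq> subfield_gen S"
  unfolding subfield_gen_def by blast

lemma subfield_gen_least: "is_subfield F \<Longrightarrow> S \<subseteq> F \<Longrightarrow> subfield_gen S \<subseteq> F"
  unfolding subfield_gen_def by blast

lemma subfield_cross_ratio:
  assumes F: "is_subfield F" and "a * c \<in> F" "d * b \<in> F" "d * c \<in> F" "d * c \<noteq> 0"
  shows "a * b \<in> F"
proof -
  have "a * b = (a * c) * (d * b) * inverse (d * c)"
    using \<open>d * c \<noteq> 0\<close> by (simp add: field_simps)
  then show ?thesis
    using assms unfolding is_subfield_def by metis
qed

lemma is_subfield_Lk: "is_subfield (Lk X k)"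
  unfolding Lk_def by (rule is_subfield_subfield_gen)

lemma weight_in_Lk:
  assumes "set r \<subseteq> X" "length r \<le> k"
  shows "weight r \<in> Lk X k"
proof -
  have trivial: "0 \<in> Lk X k" "1 \<in> Lk X k"
    using is_subfield_Lk unfolding is_subfield_def by auto
  consider "r = []" | "weight r = 0" | "is_cycle X r"
    using assms(1) unfolding is_cycle_def by (cases r) auto
  then show ?thesis
  proof cases
    case 1
    then show ?thesis using trivial by (simp add: weight_def)
  next
    case 2
    then show ?thesis using trivial by simp
  next
    case 3
    then have "weight r \<in> {weight r | r. is_cycle X r \<and> length r \<le> k}"
      using assms(2) by blast
    then show ?thesis
      unfolding Lk_def by (rule subsetD[OF subfield_gen_subset])
  qed
qed

lemma Lk_mono: "j \<le> k \<Longrightarrow> Lk X j \<subseteq> Lk X k"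
  unfolding Lk_def[of X j] is_cycle_def
  by (rule subfield_gen_least[OF is_subfield_Lk]) (auto intro: weight_in_Lk)

lemma Lk_eq_if_cycle_weights_in_Lk:
  assumes "\<And>r. is_cycle X r \<Longrightarrow> length r = k \<Longrightarrow> weight r \<in> Lk X (k - 1)"
  shows "Lk X (k - 1) = Lk X k"
proof
  show "Lk X (k - 1) \<subseteq> Lk X k"
    by (rule Lk_mono) simp
  show "Lk X k \<subseteq> Lk X (k - 1)"
    unfolding Lk_def[of X k]
  proof (rule subfield_gen_least[OF is_subfield_Lk], safe)
    fix r assume "is_cycle X r" "length r \<le> k"
    then show "weight r \<in> Lk X (k - 1)"
      using assms weight_in_Lk[of r X "k - 1"] unfolding is_cycle_def by fastforce
  qed
qed

lemma weight_cycle_of_in_Lk_by_shortcuts: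
  assumes A: "from_to A s t" and B: "from_to B t s" and D: "from_to D s t" and C: "from_to C t s"
    and X: "set A \<subseteq> X" "set B \<subseteq> X" "set C \<subseteq> X" "set D \<subseteq> X"
    and shorter: "length D < length A" "length C < length B"
    and nonzero: "path_weight D \<noteq> 0" "path_weight C \<noteq> 0"
  shows "weight (cycle_of A B) \<in> Lk X (length (cycle_of A B) - 1)"
proof -
  let ?L = "Lk X (length (cycle_of A B) - 1)"
  have "weight (cycle_of P Q) \<in> ?L"
    if "from_to P s t" "from_to Q t s" "set P \<subseteq> X" "set Q \<subseteq> X"
       "length P + length Q < length A + length B" for P Q
    using that length_cycle_of[of P s t Q] length_cycle_of[OF A B] set_cycle_of[of P Q]
    by (intro weight_in_Lk) auto
  then have "weight (cycle_of A C) \<in> ?L" "weight (cycle_of D B) \<in> ?L" "weight (cycle_of D C) \<in> ?L"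
    using A B C D X shorter by auto
  moreover have "weight (cycle_of D C) \<noteq> 0"
    using weight_cycle_of[OF D C] nonzero by simp
  ultimately have "path_weight A * path_weight B \<in> ?L"
    unfolding weight_cycle_of[OF A C] weight_cycle_of[OF D B] weight_cycle_of[OF D C]
    by (rule subfield_cross_ratio[OF is_subfield_Lk])
  then show ?thesis
    unfolding weight_cycle_of[OF A B] .
qed

lemma dir_diam_le_path:
  assumes "dir_diam_le Y d" "s \<in> Y" "t \<in> Y"
  obtains P where "from_to P s t" "length P \<le> Suc d" "set P \<subseteq> Y" "path_weight P \<noteq> 0"
proof -
  obtain m p where m: "m \<le> d" "p 0 = s" "p m = t" and edges: "\<forall>i<m. edge Y (p i) (p (Suc i))"
    using assms(1,2,3) unfolding dir_diam_le_def by blast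
  let ?P = "map p [0..<Suc m]"
  have "from_to ?P s t"
    using m unfolding from_to_def by (simp del: upt_Suc add: last_map hd_map)
  moreover have "set ?P \<subseteq> Y"
  proof
    fix x assume "x \<in> set ?P"
    then obtain i where "i \<le> m" "x = p i"
      by (auto simp del: upt_Suc simp: less_Suc_eq_le)
    then show "x \<in> Y"
      using edges assms(3) m(3) unfolding edge_def by (cases "i = m") auto
  qed
  moreover have "path_weight ?P \<noteq> 0"
    using edges unfolding path_weight_map_upt edge_def by simp
  ultimately show ?thesis
    using m(1) that by simp
qed

lemma weight_long_cycle_in_Lk:
  assumes diam: "dir_diam_le X 2" and cycle: "is_cycle X r" and long: "length r \<ge> 6"
  shows "weight r \<in> Lk X (length r - 1)"
proof -
  obtain r0 r1 r2 r3 rest where r: "r = r0 # r1 # r2 # r3 # rest"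
    using long by (auto simp: numeral_eq_Suc Suc_le_length_iff)
  have X: "set r \<subseteq> X"
    using cycle unfolding is_cycle_def by simp
  obtain D where D: "from_to D r0 r3" "length D \<le> 3" "set D \<subseteq> X" "path_weight D \<noteq> 0"
    using dir_diam_le_path[OF diam, of r0 r3] X r by auto
  obtain C where C: "from_to C r3 r0" "length C \<le> 3" "set C \<subseteq> X" "path_weight C \<noteq> 0"
    using dir_diam_le_path[OF diam, of r3 r0] X r by auto
  have "weight (cycle_of [r0, r1, r2, r3] (r3 # rest @ [r0]))
      \<in> Lk X (length (cycle_of [r0, r1, r2, r3] (r3 # rest @ [r0])) - 1)"
    by (rule weight_cycle_of_in_Lk_by_shortcuts[OF _ _ D(1) C(1) _ _ C(3) D(3) _ _ D(4) C(4)])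
      (use X r D(2) C(2) long in \<open>auto simp: from_to_def\<close>)
  moreover have "cycle_of [r0, r1, r2, r3] (r3 # rest @ [r0]) = r"
    by (simp add: cycle_of_def r)
  ultimately show ?thesis
    by simp
qed

lemma weight_cycle_with_chords_in_Lk:
  assumes cycle: "is_cycle X r" and len: "length r \<in> {4, 5}"
    and chords: "\<forall>i<length r. edge X (r ! i) (r ! ((i + 2) mod length r))"
  shows "weight r \<in> Lk X (length r - 1)"
proof -
  have X: "set r \<subseteq> X" and nonzero: "weight r \<noteq> 0"
    using cycle unfolding is_cycle_def by auto
  from len consider a b c d where "r = [a, b, c, d]" | a b c d e where "r = [a, b, c, d, e]"
    by (auto simp: numeral_eq_Suc length_Suc_conv)
  then show ?thesis
  proof cases
    case 1
    have "edge X a c" "edge X c a"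
      using chords[rule_format, of 0] chords[rule_format, of 2] 1 by simp_all
    then have "weight (cycle_of [a, b, c] [c, d, a]) \<in> Lk X (length (cycle_of [a, b, c] [c, d, a]) - 1)"
      using X 1
      by (intro weight_cycle_of_in_Lk_by_shortcuts[where D = "[a, c]" and C = "[c, a]"])
        (auto simp: from_to_def edge_def)
    then show ?thesis
      using 1 by (simp add: cycle_of_def)
  next
    case 2
    have "edge X a c" "edge X c e"
      using chords[rule_format, of 0] chords[rule_format, of 2] 2 by simp_all
    moreover have "edge_weight e a \<noteq> 0"
      using nonzero 2 by (simp add: weight_eq_path_weight)
    ultimately have "weight (cycle_of [a, b, c] [c, d, e, a])
        \<in> Lk X (length (cycle_of [a, b, c] [c, d, e, a]) - 1)"
      using X 2
      by (intro weight_cycle_of_in_Lk_by_shortcuts[where D = "[a, c]" and C = "[c, e, a]"])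
        (auto simp: from_to_def edge_def)
    then show ?thesis
      using 2 by (simp add: cycle_of_def)
  qed
qed

theorem lemma4p3:
  fixes G :: "('a::{field,finite},'n::finite) mtx set"
    and X T :: "('a,'n) mtx set"
    and k :: nat
  assumes q_odd: "odd CARD('a)"
    and dim: "CARD('n) \<ge> 4"
    and G_kind: "is_SL G \<or> is_Sp G \<or> is_SU G"
    and T_def: "T = {s \<in> G. is_transvection s}"
    and XT: "X \<subseteq> T"
    and gen: "mgen X = G"
    and P2: "vec.span (u_of ` X) = UNIV" "vec.span (phi_of ` X) = UNIV" "strongly_connected X"
    and P3: "subfield_gen {weight r | r. is_cycle X r} = UNIV"
    and P4: "is_Sp G \<Longrightarrow> \<forall>r. is_cycle T r \<longrightarrow> symplectic_cycle r"
    and P5: "\<And>sq. is_SL G \<Longrightarrow> sq * sq = CARD('a) \<Longrightarrow>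
               \<exists>r. is_cycle X r \<and> \<not> unitary_cycle sq r"
    and P6: "\<And>X''. X \<subseteq> X'' \<Longrightarrow> X'' \<subseteq> T \<Longrightarrow> dir_diam_le X'' 2"
    and P7: "\<And>X''. X \<subseteq> X'' \<Longrightarrow> X'' \<subseteq> T \<Longrightarrow> twoway_diam_le X'' 6"
    and k3: "k \<ge> 3"
    and Lneq: "Lk X (k - 1) \<noteq> Lk X k"
  shows "k \<in> {3, 4, 5} \<and>
    (k \<in> {4, 5} \<longrightarrow> (\<forall>r. is_cycle X r \<and> length r = k \<and> weight r \<notin> Lk X (k - 1) \<longrightarrow>
        (\<exists>i<k. \<not> edge X (r ! i) (r ! ((i + 2) mod k)))))"
proof -
  have "dir_diam_le X 2"
    using P6 XT by blast
  then have "k < 6"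
    using Lneq Lk_eq_if_cycle_weights_in_Lk weight_long_cycle_in_Lk by (metis not_less)
  with k3 have "k \<in> {3, 4, 5}"
    by auto
  moreover have "\<exists>i<k. \<not> edge X (r ! i) (r ! ((i + 2) mod k))"
    if "k \<in> {4, 5}" "is_cycle X r" "length r = k" "weight r \<notin> Lk X (k - 1)" for r
    using that weight_cycle_with_chords_in_Lk[of X r] by auto
  ultimately show ?thesis
    by blast
qed

end
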